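(* If $0\le r\le b-1$ then $\mathrm{Var}(\mu^{(r)})=r(1+b-r)$.
   Context: Fix an integer $b\ge2$. For $n\in\mathbb{N}$ with base-$b$ digits $n_k$, $s(n):=\sum_kn_k$. For $r,n\in\mathbb{N}$, $\Delta^{(r)}(n):=s(n+r)-s(n)$, and $\mu^{(r)}(d):=\lim_{N\to\infty}\frac1N|\{n<N:\Delta^{(r)}(n)=d\}|$ for $d\in\mathbb{Z}$; these limits exist and $\mu^{(r)}$ is a probability measure on $\mathbb{Z}$ with finite moments. $\mathrm{Var}(\mu^{(r)})$ is its variance. *)

theory Defs
  imports "HOL-Analysis.Analysis"
begin

text \<open>Base-b digit sum: the n-th digit of n is (n div b^k) mod b; all digits of
  index k > n vanish when b \<ge> 2, so summing over k \<le> n covers all digits.\<close>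
definition digsum :: "nat \<Rightarrow> nat \<Rightarrow> nat" where
  "digsum b n = (\<Sum>k\<le>n. (n div b ^ k) mod b)"

definition Delta :: "nat \<Rightarrow> nat \<Rightarrow> nat \<Rightarrow> int" where
  "Delta b r n = int (digsum b (n + r)) - int (digsum b n)"

definition mu :: "nat \<Rightarrow> nat \<Rightarrow> int \<Rightarrow> real" where
  "mu b r d = lim (\<lambda>N. real (card {n. n < N \<and> Delta b r n = d}) / real N)"

definition mu_mean :: "nat \<Rightarrow> nat \<Rightarrow> real" where
  "mu_mean b r = (\<Sum>\<^sub>\<infinity>d\<in>(UNIV::int set). real_of_int d * mu b r d)"

definition mu_var :: "nat \<Rightarrow> nat \<Rightarrow> real" where
  "mu_var b r = (\<Sum>\<^sub>\<infinity>d\<in>(UNIV::int set). (real_of_int d - mu_mean b r)\<^sup>2 * mu b r d)"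

end

theory Submission imports Defs begin

text \<open>Legendre's formula s(n) = n - (b - 1) * (SUM k >= 1. n div b^k) turns
  Delta^(r)(n) into r - (b - 1) * c(n), where c(n) is the number of carries in the addition
  n + r. For r <= b a carry leaves the k lowest digits exactly when n mod b^k >= b^k - r;
  these events decrease in k and have density r / b^k, so c(n) = k has density
  r/b^k - r/b^(k+1) for k >= 1 and 1 - r/b for k = 0. The moments of this geometric
  distribution give mean 0 and variance r (b + 1 - r).\<close>

lemma digsum_0 [simp]: "digsum b 0 = 0"
  by (simp add: digsum_def)

lemma less_power_self: "(b::nat) \<ge> 2 \<Longrightarrow> k < b ^ k"
  using less_exp power_mono less_le_trans by (metis zero_le_numeral)

lemma digsum_eq_sum_atMost:
  assumes "b \<ge> 2" and "n \<le> M"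
  shows "digsum b n = (\<Sum>k\<le>M. n div b ^ k mod b)"
  unfolding digsum_def
proof (rule sum.mono_neutral_left)
  show "\<forall>k\<in>{..M} - {..n}. n div b ^ k mod b = 0"
  proof
    fix k assume "k \<in> {..M} - {..n}"
    then have "n < b ^ k"
      using less_power_self[OF assms(1), of k] by simp
    then show "n div b ^ k mod b = 0" by simp
  qed
qed (use assms in auto)

lemma digsum_div_mod:
  assumes b: "b \<ge> 2"
  shows "digsum b n = n mod b + digsum b (n div b)"
proof -
  have "digsum b n = (\<Sum>k\<le>Suc n. n div b ^ k mod b)"
    by (rule digsum_eq_sum_atMost[OF b]) simp
  also have "\<dots> = n mod b + (\<Sum>k\<le>n. n div b div b ^ k mod b)"
    by (subst sum.atMost_Suc_shift) (simp add: div_mult2_eq)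
  also have "(\<Sum>k\<le>n. n div b div b ^ k mod b) = digsum b (n div b)"
    using digsum_eq_sum_atMost[OF b, of "n div b" n] by simp
  finally show ?thesis .
qed

lemma digsum_plus_sum_div_power:
  assumes b: "b \<ge> 2" and "n < b ^ M"
  shows "digsum b n + (b - 1) * (\<Sum>k<M. n div b ^ Suc k) = n"
  using assms(2)
proof (induction M arbitrary: n)
  case 0
  then show ?case by simp
next
  case (Suc M)
  define q where "q = n div b"
  have "q < b ^ M"
    using Suc.prems b by (simp add: q_def less_mult_imp_div_less mult.commute)
  note IH = Suc.IH[OF this]
  have "(\<Sum>k<Suc M. n div b ^ Suc k) = q + (\<Sum>k<M. q div b ^ Suc k)"
    unfolding sum.lessThan_Suc_shift by (simp add: div_mult2_eq q_def)
  then have "digsum b n + (b - 1) * (\<Sum>k<Suc M. n div b ^ Suc k)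
      = n mod b + (b - 1) * q + (digsum b q + (b - 1) * (\<Sum>k<M. q div b ^ Suc k))"
    by (subst digsum_div_mod[OF b]) (simp add: q_def distrib_left)
  also have "\<dots> = n mod b + ((b - 1) * q + q)"
    using IH by simp
  also have "(b - 1) * q + q = b * q"
    using b by (cases b) simp_all
  finally show ?case by (simp add: q_def)
qed

lemma add_div_eq_if:
  fixes m n r :: nat
  assumes "0 < m" and "r \<le> m"
  shows "(n + r) div m = n div m + (if m \<le> n mod m + r then 1 else 0)"
proof -
  have "(n + r) div m = (n mod m + r + n div m * m) div m" by simp
  also have "\<dots> = n div m + (n mod m + r) div m"
    using assms(1) by (simp only: div_mult_self1 neq0_conv)
  also have "(n mod m + r) div m = (if m \<le> n mod m + r then 1 else 0)"
  proof (cases "m \<le> n mod m + r")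
    case True
    have "n mod m + r - m < m" using assms mod_less_divisor[of m n] by linarith
    then show ?thesis using True assms(1) by (simp add: le_div_geq)
  qed simp
  finally show ?thesis .
qed

definition carry_out :: "nat \<Rightarrow> nat \<Rightarrow> nat \<Rightarrow> nat \<Rightarrow> bool" where
  "carry_out b r n k \<longleftrightarrow> b ^ k \<le> n mod b ^ k + r"

text \<open>Every k with carry_out b r n k lies in {1..n + r} (see carry_out_imp_less).\<close>
definition carries :: "nat \<Rightarrow> nat \<Rightarrow> nat \<Rightarrow> nat" where
  "carries b r n = card {k \<in> {1..n + r}. carry_out b r n k}"

lemma carry_out_SucD:
  assumes "b > 0" and "carry_out b r n (Suc k)"
  shows "carry_out b r n k"
proof (rule ccontr)
  assume "\<not> carry_out b r n k"
  then have low: "n mod b ^ k + r < b ^ k" by (simp add: carry_out_def)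
  have "Suc (n div b ^ k mod b) \<le> b" using assms(1) by (simp add: Suc_leI)
  then have "b ^ k * (n div b ^ k mod b) + b ^ k \<le> b ^ Suc k"
    by (metis mult_Suc_right mult_le_mono2 power_Suc2 add.commute)
  moreover have "n mod b ^ Suc k = b ^ k * (n div b ^ k mod b) + n mod b ^ k"
    by (metis mod_mult2_eq power_Suc2)
  ultimately have "n mod b ^ Suc k + r < b ^ Suc k" using low by linarith
  with assms(2) show False by (simp add: carry_out_def)
qed

lemma carry_out_antimono:
  assumes "b > 0" and "carry_out b r n k" and "j \<le> k"
  shows "carry_out b r n j"
  using assms(3,2) by (induction rule: dec_induct) (auto dest: carry_out_SucD[OF assms(1)])

lemma carry_out_imp_less:
  assumes "b \<ge> 2" and "carry_out b r n k"
  shows "k < n + r"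
proof -
  have "k < b ^ k" using less_power_self[OF assms(1)] .
  also have "\<dots> \<le> n mod b ^ k + r" using assms(2) by (simp add: carry_out_def)
  also have "\<dots> \<le> n + r" by simp
  finally show ?thesis .
qed

lemma le_carries_iff:
  assumes b: "b \<ge> 2" and "0 < k"
  shows "k \<le> carries b r n \<longleftrightarrow> carry_out b r n k"
proof
  assume "carry_out b r n k"
  then have "carry_out b r n j" if "j \<le> k" for j
    using carry_out_antimono b that by simp
  then have "{1..k} \<subseteq> {j \<in> {1..n + r}. carry_out b r n j}"
    using carry_out_imp_less[OF b \<open>carry_out b r n k\<close>] by auto
  from card_mono[OF _ this] show "k \<le> carries b r n"
    unfolding carries_def by simp
next
  assume "k \<le> carries b r n"
  show "carry_out b r n k"
  proof (rule ccontr)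
    assume "\<not> carry_out b r n k"
    then have "\<not> carry_out b r n j" if "k \<le> j" for j
      using carry_out_antimono b that by fastforce
    then have "{j \<in> {1..n + r}. carry_out b r n j} \<subseteq> {1..<k}"
      by (auto simp: not_le[symmetric])
    from card_mono[OF _ this] have "carries b r n \<le> k - 1"
      unfolding carries_def by simp
    with \<open>k \<le> carries b r n\<close> \<open>0 < k\<close> show False by linarith
  qed
qed

lemma sum_add_div_power:
  assumes "b \<ge> 2" and "r \<le> b"
  shows "(\<Sum>k<M. (n + r) div b ^ Suc k)
    = (\<Sum>k<M. n div b ^ Suc k) + card {k \<in> {1..M}. carry_out b r n k}"
proof -
  have "(n + r) div b ^ Suc k = n div b ^ Suc k + (if carry_out b r n (Suc k) then 1 else 0)" for k
  proof -
    have "r \<le> b ^ Suc k"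
      using assms order.trans[OF assms(2) self_le_power[of b "Suc k"]] by simp
    then show ?thesis
      using assms(1) by (simp add: add_div_eq_if carry_out_def)
  qed
  moreover have "{k \<in> {1..M}. carry_out b r n k} = Suc ` {k \<in> {..<M}. carry_out b r n (Suc k)}"
    by (auto simp: image_iff) (metis Suc_le_D Suc_le_mono le_imp_less_Suc)
  ultimately show ?thesis
    by (simp add: sum.distrib card_image sum.If_cases Int_def)
qed

lemma Delta_eq_carries:
  assumes b: "b \<ge> 2" and r: "r \<le> b"
  shows "Delta b r n = int r - (int b - 1) * int (carries b r n)"
proof -
  define M where "M = n + r"
  define c where "c = b - 1"
  have "n + r < b ^ M" "n < b ^ M"
    unfolding M_def using less_power_self[OF b, of "n + r"] by auto
  have "digsum b (n + r) + c * (\<Sum>k<M. (n + r) div b ^ Suc k) = n + r"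
    unfolding c_def by (rule digsum_plus_sum_div_power[OF b \<open>n + r < b ^ M\<close>])
  moreover have "digsum b n + c * (\<Sum>k<M. n div b ^ Suc k) = n"
    unfolding c_def by (rule digsum_plus_sum_div_power[OF b \<open>n < b ^ M\<close>])
  moreover have "(\<Sum>k<M. (n + r) div b ^ Suc k) = (\<Sum>k<M. n div b ^ Suc k) + carries b r n"
    unfolding carries_def M_def by (rule sum_add_div_power[OF b r])
  ultimately have "digsum b (n + r) + c * carries b r n = digsum b n + r"
    by (simp add: distrib_left)
  then have "int (digsum b (n + r)) - int (digsum b n) = int r - int c * int (carries b r n)"
    by (simp flip: of_nat_add of_nat_mult)
  moreover have "int c = int b - 1" using b by (simp add: c_def of_nat_diff)
  ultimately show ?thesis
    unfolding Delta_def by simp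
qed

definition count_ratio :: "(nat \<Rightarrow> bool) \<Rightarrow> nat \<Rightarrow> real" where
  "count_ratio P N = real (card {n. n < N \<and> P n}) / real N"

lemma card_less_add_periodic:
  fixes P :: "nat \<Rightarrow> bool"
  assumes per: "\<And>n. P (n + m) = P n"
  shows "card {n. n < m + N \<and> P n} = card {n. n < m \<and> P n} + card {n. n < N \<and> P n}"
proof -
  have "{n. n < m + N \<and> P n} = {n. n < m \<and> P n} \<union> (\<lambda>n. n + m) ` {n. n < N \<and> P n}"
  proof (intro set_eqI iffI)
    fix x assume x: "x \<in> {n. n < m + N \<and> P n}"
    show "x \<in> {n. n < m \<and> P n} \<union> (\<lambda>n. n + m) ` {n. n < N \<and> P n}"
    proof (cases "x < m")
      case False
      then have "x = (x - m) + m" "x - m < N \<and> P (x - m)"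
        using x per[of "x - m"] by auto
      then show ?thesis by blast
    qed (use x in auto)
  qed (use per in auto)
  then show ?thesis
    by (simp, subst card_Un_disjoint) (auto simp: card_image inj_on_def)
qed

lemma card_less_mult_add_periodic:
  fixes P :: "nat \<Rightarrow> bool"
  assumes per: "\<And>n. P (n + m) = P n"
  shows "card {n. n < q * m + s \<and> P n} = q * card {n. n < m \<and> P n} + card {n. n < s \<and> P n}"
proof (induction q)
  case (Suc q)
  have "card {n. n < Suc q * m + s \<and> P n} = card {n. n < m + (q * m + s) \<and> P n}"
    by (simp add: add.assoc)
  also have "\<dots> = card {n. n < m \<and> P n} + card {n. n < q * m + s \<and> P n}"
    by (rule card_less_add_periodic[where P=P and m=m, OF per])
  finally show ?case using Suc by simp
qed simp

lemma card_Collect_less_le: "card {n::nat. n < s \<and> P n} \<le> s"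
  using card_mono[of "{..<s}" "{n. n < s \<and> P n}"] by auto

lemma count_ratio_periodic:
  assumes m: "m > 0" and per: "\<And>n. P (n + m) = P n"
  shows "count_ratio P \<longlonglongrightarrow> real (card {n. n < m \<and> P n}) / real m"
proof -
  define a where "a = card {n. n < m \<and> P n}"
  have a: "a \<le> m"
    unfolding a_def by (rule card_Collect_less_le)
  have "\<bar>count_ratio P N - a / m\<bar> \<le> m / N" if "N > 0" for N
  proof -
    define s where "s = N mod m"
    define A where "A = card {n. n < s \<and> P n}"
    have N: "N = N div m * m + s" unfolding s_def by simp
    have A: "A \<le> s" "s < m"
      unfolding A_def s_def using m card_Collect_less_le by auto
    have "card {n. n < N \<and> P n} = N div m * a + A"
      unfolding a_def A_def by (subst N, rule card_less_mult_add_periodic[where P=P and m=m, OF per])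
    moreover have "real N = real (N div m) * m + s"
      by (subst N) simp
    ultimately have "\<bar>count_ratio P N - a / m\<bar> = \<bar>real m * A - real a * s\<bar> / (real m * N)"
      using m \<open>N > 0\<close> by (simp add: count_ratio_def field_simps abs_div)
    also have "\<dots> \<le> real m * m / (real m * N)"
    proof (rule divide_right_mono)
      have "real m * A \<le> real m * m" "real a * s \<le> real m * m"
        using A a by (auto intro!: mult_mono)
      moreover have "0 \<le> real m * A" "0 \<le> real a * s" by simp_all
      ultimately show "\<bar>real m * A - real a * s\<bar> \<le> real m * m"
        unfolding abs_le_iff by linarith
    qed simp
    also have "\<dots> = m / N"
      using m by simp
    finally show ?thesis .
  qed
  then have "\<forall>\<^sub>F N in sequentially. norm (count_ratio P N - a / m) \<le> m / N"
    by (auto intro: eventually_mono[OF eventually_gt_at_top[of 0]])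
  then have "(\<lambda>N. count_ratio P N - a / m) \<longlonglongrightarrow> 0"
    by (rule Lim_null_comparison) (rule lim_const_over_n)
  then show ?thesis unfolding a_def by (rule LIM_zero_cancel)
qed

lemma count_ratio_conj_not:
  assumes "\<And>n. Q n \<Longrightarrow> P n"
  shows "count_ratio (\<lambda>n. P n \<and> \<not> Q n) N = count_ratio P N - count_ratio Q N"
proof -
  have "{n. n < N \<and> P n \<and> \<not> Q n} = {n. n < N \<and> P n} - {n. n < N \<and> Q n}"
    by auto
  moreover have "{n. n < N \<and> Q n} \<subseteq> {n. n < N \<and> P n}"
    using assms by auto
  ultimately show ?thesis
    unfolding count_ratio_def by (simp add: card_Diff_subset card_mono of_nat_diff diff_divide_distrib)
qed

lemma count_ratio_carry_out:
  assumes "b \<ge> 2" and "r \<le> b" and "0 < k"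
  shows "count_ratio (\<lambda>n. carry_out b r n k) \<longlonglongrightarrow> real r / real b ^ k"
proof -
  have "r \<le> b ^ k"
    using assms order.trans[OF assms(2) self_le_power[of b k]] by simp
  moreover have "{n. n < b ^ k \<and> carry_out b r n k} = {b ^ k - r..<b ^ k}"
    by (auto simp: carry_out_def)
  ultimately have "card {n. n < b ^ k \<and> carry_out b r n k} = r"
    by simp
  then show ?thesis
    using count_ratio_periodic[of "b ^ k" "\<lambda>n. carry_out b r n k"] assms(1)
    by (simp add: carry_out_def)
qed

lemma count_ratio_le_carries:
  assumes "b \<ge> 2" and "r \<le> b"
  shows "count_ratio (\<lambda>n. k \<le> carries b r n) \<longlonglongrightarrow> (if k = 0 then 1 else real r / real b ^ k)"
proof (cases "k = 0")
  case True
  then show ?thesis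
    using count_ratio_periodic[of 1 "\<lambda>_. True"] by simp
next
  case False
  then show ?thesis
    using count_ratio_carry_out[OF assms] le_carries_iff[OF assms(1)] by simp
qed

definition carries_pmf :: "nat \<Rightarrow> nat \<Rightarrow> nat \<Rightarrow> real" where
  "carries_pmf b r k = (if k = 0 then 1 else real r / real b ^ k) - real r / real b ^ Suc k"

lemma carries_pmf_Suc:
  assumes "b > 0"
  shows "carries_pmf b r (Suc n) = r * (1 / b) * (1 - 1 / b) * (1 / b) ^ n"
  using assms by (simp add: carries_pmf_def power_divide field_simps)

lemma carries_pmf_nonneg:
  assumes "0 < b" and "r \<le> b"
  shows "carries_pmf b r k \<ge> 0"
proof (cases k)
  case 0
  then show ?thesis using assms by (auto simp: carries_pmf_def divide_le_eq_1)
next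
  case (Suc n)
  have "1 / real b \<le> 1" using assms(1) by simp
  then show ?thesis using Suc assms(1) by (simp add: carries_pmf_Suc)
qed

lemma count_ratio_carries_eq:
  assumes "b \<ge> 2" and "r \<le> b"
  shows "count_ratio (\<lambda>n. carries b r n = k) \<longlonglongrightarrow> carries_pmf b r k"
proof -
  have "count_ratio (\<lambda>n. carries b r n = k) = (\<lambda>N.
      count_ratio (\<lambda>n. k \<le> carries b r n) N - count_ratio (\<lambda>n. Suc k \<le> carries b r n) N)"
    by (subst count_ratio_conj_not[symmetric]) (auto intro!: arg_cong[where f=count_ratio])
  then show ?thesis
    unfolding carries_pmf_def
    using tendsto_diff[OF count_ratio_le_carries[OF assms, of k] count_ratio_le_carries[OF assms, of "Suc k"]]
    by simp
qed

lemma mu_carries_value: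
  assumes "b \<ge> 2" and "r \<le> b"
  shows "mu b r (int r - (int b - 1) * int k) = carries_pmf b r k"
proof -
  have "Delta b r n = int r - (int b - 1) * int k \<longleftrightarrow> carries b r n = k" for n
    using Delta_eq_carries[OF assms, of n] assms(1) by simp
  then have "mu b r (int r - (int b - 1) * int k) = lim (count_ratio (\<lambda>n. carries b r n = k))"
    unfolding mu_def count_ratio_def by presburger
  then show ?thesis
    using limI[OF count_ratio_carries_eq[OF assms]] by simp
qed

lemma mu_eq_0:
  assumes "b \<ge> 2" and "r \<le> b" and "d \<notin> range (\<lambda>k. int r - (int b - 1) * int k)"
  shows "mu b r d = 0"
proof -
  have empty: "{n. n < N \<and> Delta b r n = d} = {}" for N
    using assms Delta_eq_carries[OF assms(1,2)] by auto
  have "(\<lambda>N. real (card {n. n < N \<and> Delta b r n = d}) / real N) = (\<lambda>N. 0)"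
    by (simp only: empty card.empty of_nat_0 div_0)
  then show ?thesis
    unfolding mu_def by simp
qed

lemma has_sum_mu_iff:
  assumes "b \<ge> 2" and "r \<le> b"
  shows "((\<lambda>d. f d * mu b r d) has_sum s) UNIV
    \<longleftrightarrow> ((\<lambda>k. f (int r - (int b - 1) * int k) * carries_pmf b r k) has_sum s) UNIV"
proof -
  let ?g = "\<lambda>k. int r - (int b - 1) * int k"
  have "inj ?g" using assms(1) by (auto intro!: injI)
  have "((\<lambda>d. f d * mu b r d) has_sum s) UNIV \<longleftrightarrow> ((\<lambda>d. f d * mu b r d) has_sum s) (range ?g)"
    by (rule has_sum_cong_neutral) (auto simp: mu_eq_0[OF assms])
  also have "\<dots> \<longleftrightarrow> ((\<lambda>k. f (?g k) * mu b r (?g k)) has_sum s) UNIV"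
    using has_sum_reindex[OF \<open>inj ?g\<close>] by (simp add: o_def)
  also have "\<dots> \<longleftrightarrow> ((\<lambda>k. f (?g k) * carries_pmf b r k) has_sum s) UNIV"
    by (simp add: mu_carries_value[OF assms])
  finally show ?thesis .
qed

lemma sums_Suc_power2_geometric:
  fixes x :: "'a :: {real_normed_field,banach}"
  assumes "norm x < 1"
  shows "(\<lambda>n. of_nat (Suc n) ^ 2 * x ^ n) sums ((1 + x) / (1 - x) ^ 3)"
proof -
  have "x \<noteq> 1" using assms by auto
  have "(\<lambda>n. diffs (\<lambda>n. of_nat (Suc n)) n * x ^ n) sums (2 / (1 - x) ^ 3)"
  proof (rule termdiffs_sums_strong[OF geometric_deriv_sums])
    show "((\<lambda>z. 1 / (1 - z) ^ 2) has_field_derivative 2 / (1 - x) ^ 3) (at x)"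
      using \<open>x \<noteq> 1\<close> by (auto intro!: derivative_eq_intros simp: divide_simps eval_nat_numeral)
  qed (use assms in auto)
  then have "(\<lambda>n. of_nat (Suc n) * of_nat (Suc (Suc n)) * x ^ n - of_nat (Suc n) * x ^ n)
      sums (2 / (1 - x) ^ 3 - 1 / (1 - x) ^ 2)"
    by (intro sums_diff geometric_deriv_sums assms) (simp add: diffs_def mult_ac)
  moreover have "2 / (1 - x) ^ 3 - 1 / (1 - x) ^ 2 = (1 + x) / (1 - x) ^ 3"
    using \<open>x \<noteq> 1\<close> by (simp add: divide_simps eval_nat_numeral)
  ultimately show ?thesis
    by (simp add: power2_eq_square algebra_simps)
qed

lemma carries_moments:
  assumes b: "b \<ge> 2" and r: "r \<le> b"
  shows "(carries_pmf b r has_sum 1) UNIV"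
    and "((\<lambda>k. (real b - 1) * k * carries_pmf b r k) has_sum r) UNIV"
    and "((\<lambda>k. ((real b - 1) * k) ^ 2 * carries_pmf b r k) has_sum r * (real b + 1)) UNIV"
proof -
  define p where "p = carries_pmf b r"
  define x :: real where "x = 1 / real b"
  have x: "0 < x" "x < 1" "norm x < 1" using b by (auto simp: x_def)
  have b_x: "real b - 1 = (1 - x) / x" "real b + 1 = (1 + x) / x"
    using b by (auto simp: x_def field_simps)
  have p_0: "p 0 = 1 - r * x"
    by (simp add: p_def carries_pmf_def x_def)
  have p_Suc: "p (Suc n) = r * x * (1 - x) * x ^ n" for n
    using b unfolding p_def x_def by (simp add: carries_pmf_Suc)
  have p_nonneg: "p k \<ge> 0" for k
    unfolding p_def using b r by (intro carries_pmf_nonneg) simp_all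
  have "(\<lambda>n. p (Suc n)) sums (r * x * (1 - x) * (1 / (1 - x)))"
    unfolding p_Suc by (intro sums_mult geometric_sums x)
  then have "p sums 1"
    using x by (simp add: sums_Suc_iff p_0)
  then show "(carries_pmf b r has_sum 1) UNIV"
    using p_nonneg unfolding p_def by (rule sums_nonneg_imp_has_sum)
  have "(\<lambda>n. (real b - 1) * Suc n * p (Suc n)) = (\<lambda>n. r * (1 - x) ^ 2 * (Suc n * x ^ n))"
    using x by (auto simp: p_Suc b_x power2_eq_square)
  moreover have "(\<lambda>n. r * (1 - x) ^ 2 * (Suc n * x ^ n)) sums (r * (1 - x) ^ 2 * (1 / (1 - x) ^ 2))"
    by (intro sums_mult geometric_deriv_sums x)
  ultimately have "(\<lambda>k. (real b - 1) * k * p k) sums r"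
    using sums_Suc_iff[of "\<lambda>k. (real b - 1) * k * p k"] x by simp
  moreover have "(real b - 1) * k * p k \<ge> 0" for k
    using b p_nonneg by simp
  ultimately show "((\<lambda>k. (real b - 1) * k * carries_pmf b r k) has_sum r) UNIV"
    unfolding p_def by (rule sums_nonneg_imp_has_sum)
  have "(\<lambda>n. ((real b - 1) * Suc n) ^ 2 * p (Suc n))
      = (\<lambda>n. r * (1 - x) ^ 3 / x * (real (Suc n) ^ 2 * x ^ n))"
    using x by (auto simp: p_Suc b_x field_simps power2_eq_square power3_eq_cube)
  moreover have "(\<lambda>n. r * (1 - x) ^ 3 / x * (real (Suc n) ^ 2 * x ^ n))
      sums (r * (1 - x) ^ 3 / x * ((1 + x) / (1 - x) ^ 3))"
    by (intro sums_mult sums_Suc_power2_geometric x)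
  ultimately have "(\<lambda>k. ((real b - 1) * k) ^ 2 * p k) sums (r * (real b + 1))"
    using sums_Suc_iff[of "\<lambda>k. ((real b - 1) * k) ^ 2 * p k"] x by (simp add: b_x)
  moreover have "((real b - 1) * k) ^ 2 * p k \<ge> 0" for k
    using p_nonneg by simp
  ultimately show "((\<lambda>k. ((real b - 1) * k) ^ 2 * carries_pmf b r k) has_sum r * (real b + 1)) UNIV"
    unfolding p_def by (rule sums_nonneg_imp_has_sum)
qed

lemma mu_mean_eq_0:
  assumes "b \<ge> 2" and "r \<le> b"
  shows "mu_mean b r = 0"
proof -
  note moments = carries_moments[OF assms]
  have "((\<lambda>k. real r * carries_pmf b r k + (- 1) * ((real b - 1) * k * carries_pmf b r k))
      has_sum (real r * 1 + (- 1) * real r)) UNIV"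
    by (intro has_sum_add has_sum_cmult_right moments)
  then have "((\<lambda>k. real_of_int (int r - (int b - 1) * int k) * carries_pmf b r k) has_sum 0) UNIV"
    by (simp add: algebra_simps)
  then have "((\<lambda>d. real_of_int d * mu b r d) has_sum 0) UNIV"
    by (simp add: has_sum_mu_iff[OF assms])
  then show ?thesis
    unfolding mu_mean_def by (rule infsumI)
qed

lemma mu_var_eq:
  assumes "b \<ge> 2" and "r \<le> b"
  shows "mu_var b r = real r * (1 + real b - real r)"
proof -
  note moments = carries_moments[OF assms]
  have "((\<lambda>k. (real r)\<^sup>2 * carries_pmf b r k + (- 2 * real r) * ((real b - 1) * k * carries_pmf b r k)
        + ((real b - 1) * k) ^ 2 * carries_pmf b r k)
      has_sum ((real r)\<^sup>2 * 1 + (- 2 * real r) * real r + real r * (real b + 1))) UNIV"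
    by (intro has_sum_add has_sum_cmult_right moments)
  then have "((\<lambda>k. (real_of_int (int r - (int b - 1) * int k) - 0)\<^sup>2 * carries_pmf b r k)
      has_sum real r * (1 + real b - real r)) UNIV"
    by (simp add: algebra_simps power2_eq_square)
  then have "((\<lambda>d. (real_of_int d - 0)\<^sup>2 * mu b r d) has_sum real r * (1 + real b - real r)) UNIV"
    by (simp only: has_sum_mu_iff[OF assms])
  then show ?thesis
    unfolding mu_var_def mu_mean_eq_0[OF assms] by (rule infsumI)
qed

theorem mainTheorem11:
  fixes b r :: nat
  assumes "b \<ge> 2" and "r \<le> b - 1"
  shows "mu_var b r = real r * (1 + real b - real r)"
  using mu_var_eq assms by simp

end
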